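(* Let $\mathfrak g$ be a complex Lie algebra and $A_0,A_1\in\mathfrak g$. Put $G_1=\frac14[A_1,A_0]$ and define elements $A_m$ ($m\in\mathbb Z$) recursively (in both directions) by $A_{m-1}-A_{m+1}=\frac12[A_m,G_1]$, and then $G_m=\frac14[A_m,A_0]$ for all $m\in\mathbb Z$. The following are equivalent: (I) (Dolan–Grady condition) $[A_1,[A_1,[A_1,A_0]]]=16[A_1,A_0]$ and $[A_0,[A_0,[A_0,A_1]]]=16[A_0,A_1]$; (II) for all $m,l\in\mathbb Z$: $[A_m,A_l]=4G_{m-l}$, $[A_m,G_l]=2A_{m-l}-2A_{m+l}$, $[G_m,G_l]=0$.
   Context: All Lie algebras are over $\mathbb C$. *)

theory Defs
  imports Complex_Main
begin

definition lie_algebra ::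
  "(complex \<Rightarrow> 'a::ab_group_add \<Rightarrow> 'a) \<Rightarrow> ('a \<Rightarrow> 'a \<Rightarrow> 'a) \<Rightarrow> bool" where
  "lie_algebra scale br \<longleftrightarrow>
     vector_space scale \<and>
     (\<forall>x y z. br (x + y) z = br x z + br y z) \<and>
     (\<forall>x y z. br x (y + z) = br x y + br x z) \<and>
     (\<forall>c x y. br (scale c x) y = scale c (br x y)) \<and>
     (\<forall>c x y. br x (scale c y) = scale c (br x y)) \<and>
     (\<forall>x. br x x = 0) \<and>
     (\<forall>x y z. br x (br y z) + br y (br z x) + br z (br x y) = 0)"

end

theory Submission
  imports Defs
begin

(* (II) implies (I) by evaluating the first two relations at m, l in {0, 1}.

   For the converse put h = A_0/4. The Dolan-Grady relation for A_0 splits A_1 into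
   eigenvectors of ad h with eigenvalues 0, 1, -1, and on the subalgebra spanned by
   eigenvectors with integer eigenvalues the involution theta = exp(i pi ad h) is a Lie
   algebra automorphism (well defined because eigenvectors for distinct eigenvalues are
   linearly independent). It fixes A_0, maps A_1 to A_(-1), hence A_m to A_(-m) by the
   recurrence, and negates [A_1, A_0]; so [A_(k+1), A_k] = [A_1, A_0] implies the same
   equation for -k-1. With the mirror argument for A_1, applied to the sequence A_(1-m),
   this gives [A_(k+1), A_k] = [A_1, A_0] for all k.
   Then [A_(k+n), A_k] = 4 G_n for all k follows by induction on n: for
   D_k = [A_(k+n+1), A_k] the Jacobi identity gives D_k - D_(k-1) = 2 [G_1, G_n], and
   computing [G_n, G_1] once by the Jacobi identity and once by telescoping shows
   [G_n, G_1] = n [G_1, G_n], so [G_1, G_n] = 0 and D is constant. *)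

lemma (in module) telescope_constant_difference:
  assumes "\<And>k. f k - f (k - 1) = c"
  shows "f 0 - f (- int n) = scale (of_nat n) c"
proof (induction n)
  case (Suc n)
  have "- int (Suc n) = - int n - 1"
    by simp
  then have "f 0 - f (- int (Suc n)) = (f 0 - f (- int n)) + (f (- int n) - f (- int n - 1))"
    by (simp only:) simp
  also have "\<dots> = scale (of_nat (Suc n)) c"
    using Suc assms[of "- int n"] by (simp add: scale_left_distrib)
  finally show ?case .
qed simp

locale complex_lie_algebra =
  fixes scale :: "complex \<Rightarrow> 'a::ab_group_add \<Rightarrow> 'a"
    and br :: "'a \<Rightarrow> 'a \<Rightarrow> 'a"
  assumes lie_algebra: "lie_algebra scale br"
begin

sublocale vs: vector_space scale
  using lie_algebra unfolding lie_algebra_def by blast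

lemma br_add_left: "br (x + y) z = br x z + br y z"
  and br_add_right: "br x (y + z) = br x y + br x z"
  and br_scale_left: "br (scale c x) y = scale c (br x y)"
  and br_scale_right: "br x (scale c y) = scale c (br x y)"
  and br_self [simp]: "br x x = 0"
  and jacobi: "br x (br y z) + br y (br z x) + br z (br x y) = 0"
  using lie_algebra unfolding lie_algebra_def by blast+

lemma br_zero_left [simp]: "br 0 y = 0"
  using br_scale_left[of 0 0 y] by simp

lemma br_zero_right [simp]: "br x 0 = 0"
  using br_scale_right[of x 0 0] by simp

lemma br_minus_left: "br (- x) y = - br x y"
  using br_scale_left[of "-1" x y] by (simp add: vs.scale_minus_left)

lemma br_minus_right: "br x (- y) = - br x y"
  using br_scale_right[of x "-1" y] by (simp add: vs.scale_minus_left)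

lemma br_diff_left: "br (x - y) z = br x z - br y z"
  by (simp only: diff_conv_add_uminus br_add_left br_minus_left)

lemma br_diff_right: "br x (y - z) = br x y - br x z"
  by (simp only: diff_conv_add_uminus br_add_right br_minus_right)

lemma br_anticomm: "br y x = - br x y"
proof -
  have "0 = br (x + y) (x + y)" by simp
  also have "\<dots> = br x x + br y x + (br x y + br y y)"
    by (simp only: br_add_left br_add_right)
  also have "\<dots> = br x y + br y x"
    by (simp add: add.commute)
  finally show ?thesis by (metis minus_unique add.commute)
qed

lemma br_leibniz: "br x (br y z) = br (br x y) z + br y (br x z)"
proof -
  have "br y (br z x) = - br y (br x z)"
    by (simp add: br_anticomm[of x z] br_minus_right)
  moreover have "br z (br x y) = - br (br x y) z"
    by (rule br_anticomm)
  ultimately show ?thesis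
    using jacobi[of x y z] by (simp add: algebra_simps)
qed

lemmas br_linear = br_add_left br_add_right br_diff_left br_diff_right
  br_minus_left br_minus_right br_scale_left br_scale_right

definition weighted_sum :: "(int \<Rightarrow> complex) \<Rightarrow> (int \<times> 'a) list \<Rightarrow> 'a" where
  "weighted_sum \<rho> ps = sum_list (map (\<lambda>(w, e). scale (\<rho> w) e) ps)"

lemma weighted_sum_simps [simp]:
  "weighted_sum \<rho> [] = 0"
  "weighted_sum \<rho> ((w, e) # ps) = scale (\<rho> w) e + weighted_sum \<rho> ps"
  "weighted_sum \<rho> (ps @ qs) = weighted_sum \<rho> ps + weighted_sum \<rho> qs"
  by (simp_all add: weighted_sum_def)

lemma weighted_sum_add: "weighted_sum (\<lambda>w. \<rho> w + \<sigma> w) ps = weighted_sum \<rho> ps + weighted_sum \<sigma> ps"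
  by (induction ps) (auto simp: vs.scale_left_distrib)

lemma weighted_sum_mult_const: "weighted_sum (\<lambda>w. \<rho> w * c) ps = scale c (weighted_sum \<rho> ps)"
  by (induction ps) (auto simp: vs.scale_right_distrib mult.commute)

lemma weighted_sum_map_scale:
  "weighted_sum \<rho> (map (\<lambda>(w, e). (w, scale (c w) e)) ps) = weighted_sum (\<lambda>w. \<rho> w * c w) ps"
  by (induction ps) auto

lemma weighted_sum_filter:
  "\<rho> a = 0 \<Longrightarrow> weighted_sum \<rho> (filter (\<lambda>(w, e). w \<noteq> a) ps) = weighted_sum \<rho> ps"
  by (induction ps) auto

definition weight_vectors :: "'a \<Rightarrow> (int \<times> 'a) list \<Rightarrow> bool" where
  "weight_vectors h ps \<longleftrightarrow> (\<forall>(w, e) \<in> set ps. br h e = scale (of_int w) e)"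

lemma weight_vectors_simps [simp]:
  "weight_vectors h []"
  "weight_vectors h ((w, e) # ps) \<longleftrightarrow> br h e = scale (of_int w) e \<and> weight_vectors h ps"
  "weight_vectors h (ps @ qs) \<longleftrightarrow> weight_vectors h ps \<and> weight_vectors h qs"
  by (auto simp: weight_vectors_def)

lemma weight_vectors_map_scale:
  "weight_vectors h ps \<Longrightarrow> weight_vectors h (map (\<lambda>(w, e). (w, scale (c w) e)) ps)"
  by (induction ps) (auto simp: br_scale_right vs.scale_left_commute)

lemma weight_vectors_filter: "weight_vectors h ps \<Longrightarrow> weight_vectors h (filter P ps)"
  by (auto simp: weight_vectors_def)

lemma br_weighted_sum:
  "weight_vectors h ps \<Longrightarrow> br h (weighted_sum \<rho> ps) = weighted_sum (\<lambda>w. of_int w * \<rho> w) ps"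
  by (induction ps) (auto simp: br_add_right br_scale_right vs.scale_left_commute)

(* Linear independence of eigenvectors of ad h for distinct eigenvalues. *)
lemma weighted_sum_eq_0:
  assumes "weight_vectors h ps" and "weighted_sum (\<lambda>_. 1) ps = 0"
  shows "weighted_sum \<rho> ps = 0"
  using assms
proof (induction "card (fst ` set ps)" arbitrary: ps \<rho> rule: less_induct)
  case less
  show ?case
  proof (cases ps)
    case Nil
    then show ?thesis by simp
  next
    case (Cons p ps')
    define a where "a = fst p"
    define qs where
      "qs = map (\<lambda>(w, e). (w, scale (of_int (w - a)) e)) (filter (\<lambda>(w, e). w \<noteq> a) ps)"
    have qs_sum: "weighted_sum \<sigma> qs = weighted_sum (\<lambda>w. \<sigma> w * of_int (w - a)) ps" for \<sigma>
      unfolding qs_def weighted_sum_map_scale by (rule weighted_sum_filter) simp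
    have "card (fst ` set qs) < card (fst ` set ps)"
    proof (rule psubset_card_mono)
      show "fst ` set qs \<subset> fst ` set ps"
        using Cons by (force simp: qs_def a_def)
    qed simp
    moreover have "weight_vectors h qs"
      unfolding qs_def using less.prems(1) by (intro weight_vectors_map_scale weight_vectors_filter)
    moreover have "weighted_sum (\<lambda>_. 1) qs = 0"
    proof -
      have "weighted_sum (\<lambda>_. 1) qs = weighted_sum (\<lambda>w. of_int w * 1 + 1 * (- of_int a)) ps"
        unfolding qs_sum by (simp add: algebra_simps)
      also have "\<dots> = br h (weighted_sum (\<lambda>_. 1) ps)
          + scale (- of_int a) (weighted_sum (\<lambda>_. 1) ps)"
        unfolding weighted_sum_add weighted_sum_mult_const br_weighted_sum[OF less.prems(1)] ..
      finally show ?thesis using less.prems(2) by simp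
    qed
    ultimately have "weighted_sum (\<lambda>w. (\<rho> w - \<rho> a) / of_int (w - a)) qs = 0"
      by (rule less.hyps)
    moreover have
      "(\<lambda>w. (\<rho> w - \<rho> a) / of_int (w - a) * of_int (w - a)) = (\<lambda>w. \<rho> w + 1 * - \<rho> a)"
      by (auto simp: fun_eq_iff)
    ultimately have "weighted_sum (\<lambda>w. \<rho> w + 1 * - \<rho> a) ps = 0"
      unfolding qs_sum by simp
    then have "weighted_sum \<rho> ps + scale (- \<rho> a) (weighted_sum (\<lambda>_. 1) ps) = 0"
      by (simp only: weighted_sum_add weighted_sum_mult_const)
    then show ?thesis using less.prems(2) by simp
  qed
qed

definition br_list :: "(int \<times> 'a) list \<Rightarrow> (int \<times> 'a) list \<Rightarrow> (int \<times> 'a) list" where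
  "br_list ps qs = concat (map (\<lambda>(w, e). map (\<lambda>(w', e'). (w + w', br e e')) qs) ps)"

lemma weight_vectors_br_list:
  assumes "weight_vectors h ps" and "weight_vectors h qs"
  shows "weight_vectors h (br_list ps qs)"
proof -
  have "br h (br e e') = scale (of_int (w + w')) (br e e')"
    if "br h e = scale (of_int w) e" and "br h e' = scale (of_int w') e'" for w w' e e'
    using that by (simp add: br_leibniz br_scale_left br_scale_right vs.scale_left_distrib)
  then show ?thesis
    using assms unfolding weight_vectors_def br_list_def by fastforce
qed

lemma weighted_sum_br_list:
  assumes "\<And>w w'. \<rho> (w + w') = \<rho> w * \<rho> w'"
  shows "weighted_sum \<rho> (br_list ps qs) = br (weighted_sum \<rho> ps) (weighted_sum \<rho> qs)"
proof -
  have "weighted_sum \<rho> (map (\<lambda>(w', e'). (w + w', br e e')) qs)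
      = br (scale (\<rho> w) e) (weighted_sum \<rho> qs)" for w e
    by (induction qs)
      (auto simp: assms br_add_right br_scale_left br_scale_right vs.scale_right_distrib mult.commute)
  then show ?thesis
    unfolding br_list_def by (induction ps) (auto simp: br_add_left)
qed

definition parity_sign :: "int \<Rightarrow> complex" where
  "parity_sign w = (if even w then 1 else -1)"

lemma parity_sign_add: "parity_sign (w + w') = parity_sign w * parity_sign w'"
  by (simp add: parity_sign_def)

(* The involution exp(i pi ad h) on the span of the eigenvectors of ad h with integer
   eigenvalues, as a relation; parity_image_unique shows that it is a function. *)
definition parity_image :: "'a \<Rightarrow> 'a \<Rightarrow> 'a \<Rightarrow> bool" where
  "parity_image h x y \<longleftrightarrow>
     (\<exists>ps. weight_vectors h ps \<and> weighted_sum (\<lambda>_. 1) ps = x \<and> weighted_sum parity_sign ps = y)"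

lemma parity_imageE:
  assumes "parity_image h x y"
  obtains ps where "weight_vectors h ps" "weighted_sum (\<lambda>_. 1) ps = x" "weighted_sum parity_sign ps = y"
  using assms unfolding parity_image_def by blast

lemma parity_image_unique:
  assumes "parity_image h x y" and "parity_image h x y'"
  shows "y = y'"
proof -
  obtain ps where ps: "weight_vectors h ps" "weighted_sum (\<lambda>_. 1) ps = x" "weighted_sum parity_sign ps = y"
    using assms(1) by (rule parity_imageE)
  obtain qs where qs: "weight_vectors h qs" "weighted_sum (\<lambda>_. 1) qs = x" "weighted_sum parity_sign qs = y'"
    using assms(2) by (rule parity_imageE)
  define rs where "rs = ps @ map (\<lambda>(w, e). (w, scale (-1) e)) qs"
  have "weight_vectors h rs"
    unfolding rs_def using ps(1) weight_vectors_map_scale[OF qs(1), of "\<lambda>_. -1"] by simp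
  moreover have "weighted_sum (\<lambda>_. 1) rs = 0"
    unfolding rs_def weighted_sum_simps weighted_sum_map_scale weighted_sum_mult_const
    using ps(2) qs(2) by (simp add: vs.scale_minus_left)
  ultimately have "weighted_sum parity_sign rs = 0"
    by (rule weighted_sum_eq_0)
  then show ?thesis
    unfolding rs_def weighted_sum_simps weighted_sum_map_scale weighted_sum_mult_const
    using ps(3) qs(3) by (simp add: vs.scale_minus_left)
qed

lemma parity_image_weight_vector:
  "br h e = scale (of_int w) e \<Longrightarrow> parity_image h e (scale (parity_sign w) e)"
  unfolding parity_image_def by (rule exI[of _ "[(w, e)]"]) simp

lemma parity_image_add:
  assumes "parity_image h x y" and "parity_image h x' y'"
  shows "parity_image h (x + x') (y + y')"
proof -
  obtain ps where "weight_vectors h ps" "weighted_sum (\<lambda>_. 1) ps = x" "weighted_sum parity_sign ps = y"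
    using assms(1) by (rule parity_imageE)
  moreover obtain qs where "weight_vectors h qs" "weighted_sum (\<lambda>_. 1) qs = x'" "weighted_sum parity_sign qs = y'"
    using assms(2) by (rule parity_imageE)
  ultimately show ?thesis
    unfolding parity_image_def by (intro exI[of _ "ps @ qs"]) simp
qed

lemma parity_image_scale:
  assumes "parity_image h x y"
  shows "parity_image h (scale c x) (scale c y)"
proof -
  obtain ps where "weight_vectors h ps" "weighted_sum (\<lambda>_. 1) ps = x" "weighted_sum parity_sign ps = y"
    using assms by (rule parity_imageE)
  then show ?thesis
    unfolding parity_image_def
    by (intro exI[of _ "map (\<lambda>(w, e). (w, scale c e)) ps"])
      (simp only: weight_vectors_map_scale weighted_sum_map_scale weighted_sum_mult_const)
qed

lemma parity_image_diff:
  assumes "parity_image h x y" and "parity_image h x' y'"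
  shows "parity_image h (x - x') (y - y')"
  using parity_image_add[OF assms(1) parity_image_scale[OF assms(2), of "-1"]]
  by (simp add: vs.scale_minus_left)

lemma parity_image_br:
  assumes "parity_image h x y" and "parity_image h x' y'"
  shows "parity_image h (br x x') (br y y')"
proof -
  obtain ps where "weight_vectors h ps" "weighted_sum (\<lambda>_. 1) ps = x" "weighted_sum parity_sign ps = y"
    using assms(1) by (rule parity_imageE)
  moreover obtain qs where "weight_vectors h qs" "weighted_sum (\<lambda>_. 1) qs = x'" "weighted_sum parity_sign qs = y'"
    using assms(2) by (rule parity_imageE)
  ultimately show ?thesis
    unfolding parity_image_def
    by (intro exI[of _ "br_list ps qs"])
      (simp add: weight_vectors_br_list weighted_sum_br_list parity_sign_add)
qed

definition dolan_grady :: "'a \<Rightarrow> 'a \<Rightarrow> bool" where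
  "dolan_grady x y \<longleftrightarrow> br x (br x (br x y)) = scale 16 (br x y)"

lemma dolan_grady_parity_image:
  assumes "dolan_grady u v"
  shows "parity_image (scale (1/4) u) v (v - scale (1/8) (br u (br u v)))"
    and "parity_image (scale (1/4) u) (br u v) (- br u v)"
proof -
  define h where "h = scale (1/4) u"
  define X where "X = br u v"
  define Y where "Y = br u X"
  have "br u Y = scale 16 X"
    using assms unfolding dolan_grady_def X_def Y_def .
  then have brv: "br h v = scale (1/4) X" and brX: "br h X = scale (1/4) Y"
    and brY: "br h Y = scale 4 X"
    unfolding h_def X_def Y_def by (simp_all add: br_scale_left)
  \<comment> \<open>the components of v in the eigenspaces of ad h for 0, 1 and -1\<close>
  define v0 where "v0 = v - scale (1/16) Y"
  define vp where "vp = scale (1/32) (Y + scale 4 X)"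
  define vm where "vm = scale (1/32) (Y - scale 4 X)"
  have "parity_image h v0 v0"
    using parity_image_weight_vector[of h v0 0]
    unfolding v0_def by (simp add: br_linear brv brY parity_sign_def flip: X_def)
  moreover have "parity_image h vp (- vp)"
    using parity_image_weight_vector[of h vp 1]
    unfolding vp_def by (simp add: br_linear brv brY brX parity_sign_def vs.scale_minus_left add.commute)
  moreover have "parity_image h vm (- vm)"
    using parity_image_weight_vector[of h vm "-1"]
    unfolding vm_def
    by (simp add: br_linear brv brY brX parity_sign_def vs.scale_minus_left vs.scale_right_diff_distrib)
  ultimately have v_image: "parity_image h (v0 + vp + vm) (v0 + - vp + - vm)"
    and X_image: "parity_image h (scale 4 (vp - vm)) (scale 4 (- vp - - vm))"
    by (blast intro: parity_image_add parity_image_diff parity_image_scale)+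
  have "v0 + vp + vm = v"
    unfolding v0_def vp_def vm_def
    by (simp add: algebra_simps flip: vs.scale_left_distrib)
  have "v0 + - vp + - vm = v - scale (1/8) Y"
    unfolding v0_def vp_def vm_def
    by (simp add: algebra_simps flip: vs.scale_left_distrib)
  have "scale 4 (vp - vm) = X"
    unfolding vp_def vm_def
    by (simp add: algebra_simps flip: vs.scale_left_distrib)
  show "parity_image h v (v - scale (1/8) (br u (br u v)))"
    using v_image unfolding \<open>v0 + vp + vm = v\<close> \<open>v0 + - vp + - vm = v - scale (1/8) Y\<close>
    by (simp add: X_def Y_def)
  have "scale 4 (- vp - - vm) = - scale 4 (vp - vm)"
    by (simp add: algebra_simps)
  then show "parity_image h (br u v) (- br u v)"
    using X_image unfolding \<open>scale 4 (vp - vm) = X\<close> X_def by simp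
qed

end

locale onsager_sequence = complex_lie_algebra +
  fixes A :: "int \<Rightarrow> 'a"
  assumes recurrence:
    "A (m - 1) - A (m + 1) = scale (1/2) (br (A m) (scale (1/4) (br (A 1) (A 0))))"
begin

definition G :: "int \<Rightarrow> 'a" where
  "G m = scale (1/4) (br (A m) (A 0))"

lemma recurrence_G: "A (m - 1) - A (m + 1) = scale (1/2) (br (A m) (G 1))"
  unfolding recurrence G_def ..

lemma br_A_G1: "br (A m) (G 1) = scale 2 (A (m - 1) - A (m + 1))"
  unfolding recurrence_G by simp

lemma G_0 [simp]: "G 0 = 0"
  by (simp add: G_def)

lemma onsager_sequence_reflect: "onsager_sequence scale br (\<lambda>m. A (1 - m))"
proof unfold_locales
  fix m :: int
  have "A (- m) - A (2 - m) = scale (1/2) (br (A (1 - m)) (scale (1/4) (br (A 1) (A 0))))"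
    using recurrence[of "1 - m"] by simp
  then show "A (1 - (m - 1)) - A (1 - (m + 1))
    = scale (1/2) (br (A (1 - m)) (scale (1/4) (br (A (1 - 1)) (A (1 - 0)))))"
    using br_anticomm[of "A 0" "A 1"] by (simp add: br_linear algebra_simps)
qed

lemma parity_image_br_A1_A0:
  assumes "dolan_grady (A 0) (A 1)"
  shows "parity_image (scale (1/4) (A 0)) (br (A 1) (A 0)) (- br (A 1) (A 0))"
  using parity_image_scale[OF dolan_grady_parity_image(2)[OF assms], of "-1"]
  by (simp add: br_anticomm[of "A 1"])

lemma parity_image_A:
  assumes "dolan_grady (A 0) (A 1)"
  shows "parity_image (scale (1/4) (A 0)) (A (int n)) (A (- int n))"
proof -
  define h where "h = scale (1/4) (A 0)"
  have "parity_image h (A 0) (A 0)"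
    using parity_image_weight_vector[of h "A 0" 0] by (simp add: h_def br_scale_left parity_sign_def)
  moreover have "parity_image h (A 1) (A (- 1))"
  proof -
    have "A (- 1) - A 1 = scale (1/8) (br (A 0) (br (A 1) (A 0)))"
      using recurrence[of 0] by (simp add: br_scale_right)
    then have "A (- 1) = A 1 - scale (1/8) (br (A 0) (br (A 0) (A 1)))"
      by (simp add: br_anticomm[of "A 1"] br_minus_right algebra_simps)
    then show ?thesis
      unfolding h_def using dolan_grady_parity_image(1)[OF assms] by simp
  qed
  moreover have "parity_image h (G 1) (- G 1)"
    using parity_image_scale[OF parity_image_br_A1_A0[OF assms], of "1/4"]
    by (simp add: h_def G_def)
  ultimately have "parity_image h (A (int n)) (A (- int n))
    \<and> parity_image h (A (int n + 1)) (A (- int n - 1))"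
  proof (induction n)
    case (Suc n)
    have "A (int n + 2) = A (int n) - scale (1/2) (br (A (int n + 1)) (G 1))"
      using recurrence_G[of "int n + 1"] by (simp add: algebra_simps)
    moreover have "A (- int n - 2) = A (- int n) - scale (1/2) (br (A (- int n - 1)) (- G 1))"
      using recurrence_G[of "- int n - 1"] by (simp add: br_minus_right algebra_simps)
    ultimately have "parity_image h (A (int n + 2)) (A (- int n - 2))"
      using Suc by (simp add: parity_image_diff parity_image_scale parity_image_br)
    moreover have "int (Suc n) = int n + 1" "- int (Suc n) = - int n - 1"
      "int (Suc n) + 1 = int n + 2" "- int (Suc n) - 1 = - int n - 2"
      by simp_all
    ultimately show ?case
      using Suc by (simp only:)
  qed simp
  then show ?thesis
    unfolding h_def by blast
qed

lemma br_consecutive_reflect: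
  assumes "dolan_grady (A 0) (A 1)"
    and "br (A (int k + 1)) (A (int k)) = br (A 1) (A 0)"
  shows "br (A (- int k)) (A (- int k - 1)) = br (A 1) (A 0)"
proof -
  have "parity_image (scale (1/4) (A 0)) (br (A (int (Suc k))) (A (int k)))
    (br (A (- int (Suc k))) (A (- int k)))"
    using assms(1) by (intro parity_image_br parity_image_A)
  moreover have "int (Suc k) = int k + 1" "- int (Suc k) = - int k - 1"
    by simp_all
  ultimately have "parity_image (scale (1/4) (A 0)) (br (A 1) (A 0)) (br (A (- int k - 1)) (A (- int k)))"
    using assms(2) by (simp only:)
  with parity_image_br_A1_A0[OF assms(1)] have "br (A (- int k - 1)) (A (- int k)) = - br (A 1) (A 0)"
    by (blast intro: parity_image_unique)
  then show ?thesis
    by (metis br_anticomm minus_minus)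
qed

lemma br_consecutive:
  assumes "dolan_grady (A 1) (A 0)" and "dolan_grady (A 0) (A 1)"
  shows "br (A (k + 1)) (A k) = br (A 1) (A 0)"
proof -
  interpret reflected: onsager_sequence scale br "\<lambda>m. A (1 - m)"
    by (rule onsager_sequence_reflect)
  \<comment> \<open>the reflected sequence exchanges A 0 and A 1, so it turns the step from k to -k-1
    into the step from -n to n+1\<close>
  have positive: "br (A (int n + 2)) (A (int n + 1)) = br (A 1) (A 0)"
    if "br (A (- int n + 1)) (A (- int n)) = br (A 1) (A 0)" for n
  proof -
    have "br (A (- int n)) (A (1 - int n)) = br (A 0) (A 1)"
      using that br_anticomm[of "A (- int n)"] br_anticomm[of "A 0"] by (simp add: add.commute)
    then have "br (A (1 + int n)) (A (2 + int n)) = br (A 0) (A 1)"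
      using reflected.br_consecutive_reflect[of n] assms(1) by (simp add: algebra_simps)
    then show ?thesis
      using br_anticomm[of "A (1 + int n)"] br_anticomm[of "A 0"] by (simp add: add.commute)
  qed
  have "br (A (int n + 1)) (A (int n)) = br (A 1) (A 0)
    \<and> br (A (- int n + 1)) (A (- int n)) = br (A 1) (A 0)" for n
  proof (induction n)
    case (Suc n)
    have "int (Suc n) = int n + 1" "int (Suc n) + 1 = int n + 2"
      "- int (Suc n) = - int n - 1" "- int (Suc n) + 1 = - int n"
      by simp_all
    then show ?case
      using Suc positive br_consecutive_reflect[OF assms(2), of n] by (simp only:)
  qed simp
  then show ?thesis
    by (cases k rule: int_cases2) auto
qed

context
  fixes n :: nat
  assumes translation_upto: "\<And>j k. j \<le> n \<Longrightarrow> br (A (k + int j)) (A k) = br (A (int j)) (A 0)"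
begin

lemma br_A_G_upto:
  assumes "l \<le> n"
  shows "br (A m) (G (int l)) = scale 2 (A (m - int l) - A (m + int l))"
  using assms
proof (induction l arbitrary: m)
  case (Suc l)
  have "br (A (m + int l)) (A (m - 1)) = scale 4 (G (int (Suc l)))"
    using translation_upto[of "Suc l" "m - 1"] Suc.prems by (simp add: G_def algebra_simps)
  moreover have "br (A m) (A (m + int l)) = - scale 4 (G (int l))"
    using translation_upto[of l m] Suc.prems br_anticomm[of "A m"] by (simp add: G_def)
  moreover have "br (A m) (A (m - 1)) = scale 4 (G 1)"
    using translation_upto[of 1 "m - 1"] Suc.prems by (simp add: G_def)
  ultimately have "scale 4 (br (A m) (G (int (Suc l))))
      = scale 4 (br (A (m - 1)) (G (int l))) + scale 4 (br (A (m + int l)) (G 1))"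
    using br_leibniz[of "A m" "A (m + int l)" "A (m - 1)"]
    by (simp add: br_linear br_anticomm[of "G (int l)"])
  also have "\<dots> = scale 8 (A (m - 1 - int l) - A (m + int l - 1))
      + scale 8 (A (m + int l - 1) - A (m + int l + 1))"
  proof -
    have index: "m - 1 + int l = m + int l - 1"
      by simp
    show ?thesis
      using Suc.IH[of "m - 1"] Suc.prems br_A_G1[of "m + int l"] by (simp add: index)
  qed
  also have "\<dots> = scale 8 (A (m - 1 - int l) - A (m + int l + 1))"
    by (simp add: algebra_simps)
  also have "\<dots> = scale 4 (scale 2 (A (m - int (Suc l)) - A (m + int (Suc l))))"
  proof -
    have "m - 1 - int l = m - int (Suc l)" "m + int l + 1 = m + int (Suc l)"
      by simp_all
    then show ?thesis
      by (simp only:) simp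
  qed
  finally show ?case
    by (rule vs.scale_left_imp_eq[rotated]) simp
qed simp

lemma br_difference_upto:
  assumes "1 \<le> n"
  shows "br (A (k + int n + 1)) (A k) - br (A (k + int n)) (A (k - 1))
    = scale 2 (br (G 1) (G (int n)))"
proof -
  have G1_A: "br (G 1) (A m) = scale 2 (A (m + 1) - A (m - 1))" for m
    using br_anticomm[of "G 1" "A m"] by (simp add: br_A_G1 algebra_simps)
  have "br (A (k + int n)) (A (k + 1)) = br (A (k + int n - 1)) (A k)"
  proof -
    have "int (n - 1) = int n - 1"
      using assms by simp
    then show ?thesis
      using translation_upto[of "n - 1" "k + 1"] translation_upto[of "n - 1" k]
      by (simp add: algebra_simps)
  qed
  moreover have "br (A (k + int n)) (A k) = scale 4 (G (int n))"
    using translation_upto[of n k] by (simp add: G_def)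
  ultimately have "scale 4 (br (G 1) (G (int n)))
      = scale 2 (br (A (k + int n + 1)) (A k) - br (A (k + int n)) (A (k - 1)))"
    using br_leibniz[of "G 1" "A (k + int n)" "A k"]
    by (simp add: G1_A br_linear algebra_simps)
  then have "scale 2 (br (A (k + int n + 1)) (A k) - br (A (k + int n)) (A (k - 1)))
      = scale 2 (scale 2 (br (G 1) (G (int n))))"
    by simp
  then show ?thesis
    by (rule vs.scale_left_imp_eq[rotated]) simp
qed

lemma br_G_G1_upto:
  assumes "1 \<le> n"
  shows "br (G (int n)) (G 1) = 0"
proof -
  define D where "D k = br (A (k + int n + 1)) (A k)" for k
  have "D k - D (k - 1) = scale 2 (br (G 1) (G (int n)))" for k
    using br_difference_upto[OF assms, of k] by (simp add: D_def)
  then have telescope: "D 0 - D (- int n) = scale (of_nat n) (scale 2 (br (G 1) (G (int n))))"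
    by (rule vs.telescope_constant_difference)
  have Gn_A: "br (G (int n)) (A m) = scale 2 (A (m + int n) - A (m - int n))" for m
    using br_anticomm[of "G (int n)" "A m"] by (simp add: br_A_G_upto algebra_simps)
  have "br (A (1 - int n)) (A 0) = br (A 1) (A (int n))"
  proof -
    have "int (n - 1) = int n - 1"
      using assms by simp
    then show ?thesis
      using translation_upto[of "n - 1" "1 - int n"] translation_upto[of "n - 1" 1]
        br_anticomm[of "A (1 - int n)" "A 0"] br_anticomm[of "A 1" "A (int n)"]
      by (simp add: algebra_simps)
  qed
  then have "scale 4 (br (G (int n)) (G 1)) = scale 2 (D 0 - D (- int n))"
    using br_leibniz[of "G (int n)" "A 1" "A 0"]
    by (simp add: G_def[of 1] Gn_A D_def br_linear algebra_simps)
  also have "\<dots> = scale (4 * of_nat n) (br (G 1) (G (int n)))"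
    unfolding telescope by (simp add: mult.commute)
  also have "\<dots> = - scale (4 * of_nat n) (br (G (int n)) (G 1))"
    using br_anticomm[of "G (int n)" "G 1"] by simp
  finally have "scale (4 + 4 * of_nat n) (br (G (int n)) (G 1)) = 0"
    by (simp add: vs.scale_left_distrib eq_neg_iff_add_eq_0)
  moreover have "(4 + 4 * of_nat n :: complex) \<noteq> 0"
    using of_nat_eq_0_iff[of "4 + 4 * n", where 'a = complex] by simp
  ultimately show ?thesis
    by simp
qed

lemma translation_step:
  assumes "1 \<le> n"
  shows "br (A (k + int (Suc n))) (A k) = br (A (int (Suc n))) (A 0)"
proof -
  define D where "D k = br (A (k + int n + 1)) (A k)" for k
  have step: "D k = D (k - 1)" for k
    using br_difference_upto[OF assms, of k] br_G_G1_upto[OF assms]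
      br_anticomm[of "G 1" "G (int n)"]
    by (simp add: D_def)
  have "D k = D 0"
  proof (induction k rule: int_induct[of _ 0])
    case (step1 i)
    then show ?case using step[of "i + 1"] by simp
  next
    case (step2 i)
    then show ?case using step[of i] by simp
  qed simp
  then show ?thesis
    by (simp add: D_def algebra_simps)
qed

end

context
  assumes consecutive: "\<And>k. br (A (k + 1)) (A k) = br (A 1) (A 0)"
begin

lemma translation_invariance: "br (A (k + int n)) (A k) = br (A (int n)) (A 0)"
proof -
  have "\<forall>j \<le> n. \<forall>k. br (A (k + int j)) (A k) = br (A (int j)) (A 0)"
  proof (induction n)
    case (Suc n)
    have "br (A (k + int (Suc n))) (A k) = br (A (int (Suc n))) (A 0)" for k
    proof (cases "n = 0")
      case True
      then show ?thesis using consecutive[of k] by simp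
    next
      case False
      then show ?thesis using Suc.IH translation_step[of n] by simp
    qed
    then show ?case
      using Suc.IH le_Suc_eq by blast
  qed simp
  then show ?thesis
    by blast
qed

lemma G_uminus: "G (- m) = - G m"
proof -
  have "br (A (- int n)) (A 0) = - br (A (int n)) (A 0)" for n
    using translation_invariance[of "- int n" n] br_anticomm[of "A (- int n)" "A 0"] by simp
  then show ?thesis
    unfolding G_def by (cases m rule: int_cases2) (auto simp: vs.scale_minus_right)
qed

lemma br_A_A: "br (A m) (A l) = scale 4 (G (m - l))"
proof (cases "l \<le> m")
  case True
  then show ?thesis
    using translation_invariance[of l "nat (m - l)"] by (simp add: G_def)
next
  case False
  have "br (A m) (A l) = - br (A l) (A m)"
    by (rule br_anticomm)
  also have "\<dots> = - scale 4 (G (l - m))"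
    using translation_invariance[of m "nat (l - m)"] False by (simp add: G_def)
  also have "\<dots> = scale 4 (G (m - l))"
    using G_uminus[of "l - m"] by simp
  finally show ?thesis .
qed

lemma br_A_G: "br (A m) (G l) = scale 2 (A (m - l)) - scale 2 (A (m + l))"
proof (cases l rule: int_cases2)
  case (nonneg n)
  then show ?thesis
    using br_A_G_upto[of n n m] translation_invariance by (simp add: algebra_simps)
next
  case (nonpos n)
  then show ?thesis
    using br_A_G_upto[of n n m] translation_invariance G_uminus[of "int n"]
    by (simp add: br_minus_right algebra_simps)
qed

lemma br_G_G: "br (G m) (G l) = 0"
proof -
  have G_A: "br (G m) (A k) = scale 2 (A (k + m)) - scale 2 (A (k - m))" for k
    using br_anticomm[of "G m" "A k"] by (simp add: br_A_G algebra_simps)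
  have "scale 4 (br (G m) (G l)) = br (G m) (br (A l) (A 0))"
    by (simp add: G_def br_scale_right)
  also have "\<dots> = br (br (G m) (A l)) (A 0) + br (A l) (br (G m) (A 0))"
    by (rule br_leibniz)
  also have "\<dots> = 0"
    by (simp add: G_A br_linear br_A_A algebra_simps)
  finally show ?thesis
    by simp
qed

end

lemma onsager_relations_imp_dolan_grady:
  assumes br_A_A: "\<And>m l. br (A m) (A l) = scale 4 (G (m - l))"
    and br_A_G: "\<And>m l. br (A m) (G l) = scale 2 (A (m - l)) - scale 2 (A (m + l))"
  shows "dolan_grady (A 1) (A 0)" and "dolan_grady (A 0) (A 1)"
proof -
  have "scale 4 (G (- 1)) = scale 4 (- G 1)"
    using br_A_A[of 0 1] br_A_A[of 1 0] br_anticomm[of "A 0" "A 1"] by simp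
  then have "G (- 1) = - G 1"
    by (rule vs.scale_left_imp_eq[rotated]) simp
  then show "dolan_grady (A 1) (A 0)" and "dolan_grady (A 0) (A 1)"
    unfolding dolan_grady_def by (simp_all add: br_A_A br_A_G br_linear flip: vs.scale_left_distrib)
qed

theorem dolan_grady_iff_onsager_relations:
  "dolan_grady (A 1) (A 0) \<and> dolan_grady (A 0) (A 1) \<longleftrightarrow>
    (\<forall>m l. br (A m) (A l) = scale 4 (G (m - l)) \<and>
      br (A m) (G l) = scale 2 (A (m - l)) - scale 2 (A (m + l)) \<and>
      br (G m) (G l) = 0)"
proof
  assume "dolan_grady (A 1) (A 0) \<and> dolan_grady (A 0) (A 1)"
  then have "br (A (k + 1)) (A k) = br (A 1) (A 0)" for k
    using br_consecutive by blast
  then show "\<forall>m l. br (A m) (A l) = scale 4 (G (m - l)) \<and>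
      br (A m) (G l) = scale 2 (A (m - l)) - scale 2 (A (m + l)) \<and>
      br (G m) (G l) = 0"
    using br_A_A br_A_G br_G_G by blast
next
  assume "\<forall>m l. br (A m) (A l) = scale 4 (G (m - l)) \<and>
      br (A m) (G l) = scale 2 (A (m - l)) - scale 2 (A (m + l)) \<and>
      br (G m) (G l) = 0"
  then show "dolan_grady (A 1) (A 0) \<and> dolan_grady (A 0) (A 1)"
    using onsager_relations_imp_dolan_grady by blast
qed

end

theorem theorem1:
  fixes scale :: "complex \<Rightarrow> 'a::ab_group_add \<Rightarrow> 'a"
    and br :: "'a \<Rightarrow> 'a \<Rightarrow> 'a"
    and A :: "int \<Rightarrow> 'a"
  assumes lie: "lie_algebra scale br"
    and rec: "\<And>m::int. A (m - 1) - A (m + 1)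
                = scale (1/2) (br (A m) (scale (1/4) (br (A 1) (A 0))))"
  shows "(br (A 1) (br (A 1) (br (A 1) (A 0))) = scale 16 (br (A 1) (A 0)) \<and>
          br (A 0) (br (A 0) (br (A 0) (A 1))) = scale 16 (br (A 0) (A 1)))
     \<longleftrightarrow>
         (\<forall>m l::int.
            br (A m) (A l) = scale 4 (scale (1/4) (br (A (m - l)) (A 0))) \<and>
            br (A m) (scale (1/4) (br (A l) (A 0)))
              = scale 2 (A (m - l)) - scale 2 (A (m + l)) \<and>
            br (scale (1/4) (br (A m) (A 0))) (scale (1/4) (br (A l) (A 0))) = 0)"
proof -
  interpret onsager_sequence scale br A
    by unfold_locales (rule lie, rule rec)
  show ?thesis
    using dolan_grady_iff_onsager_relations unfolding dolan_grady_def G_def .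
qed

end
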